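(* Let $n\geq1$. The monoid $M_n$ is right-cancellative and admits conditional left-lcms: any two elements of $M_n$ that admit a common left-multiple admit a left-lcm. (Equivalently, the opposite monoid $M_n^{\mathrm{op}}$ is left-cancellative and admits conditional right-lcms.)
   Context: $M_n$ denotes the monoid with generators $\rho_1,\dots,\rho_n$ and relations $\rho_1\rho_n\rho_i=\rho_{i+1}\rho_n$ for $1\leq i\leq n-1$. $c$ is a left-multiple of $a$ if $c=ba$ for some $b$. A left-lcm of $a,b$ is a common left-multiple of $a$ and $b$ that right-divides every common left-multiple of $a$ and $b$. *)

theory Defs
  imports Main
begin

text \<open>The monoid M_n is presented by generators rho_1,...,rho_n (encoded as the
letters 1..n) and relations rho_1 rho_n rho_i = rho_(i+1) rho_n for 1 <= i <= n-1.
Elements of M_n are words over {1..n} modulo the congruence generated by the relations.\<close>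

definition Mword :: "nat \<Rightarrow> nat list \<Rightarrow> bool" where
  "Mword n w \<longleftrightarrow> w \<in> lists {1..n}"

definition Mrel :: "nat \<Rightarrow> nat list \<Rightarrow> nat list \<Rightarrow> bool" where
  "Mrel n u v \<longleftrightarrow> (\<exists>i. 1 \<le> i \<and> i \<le> n - 1 \<and> u = [1, n, i] \<and> v = [i + 1, n])"

inductive Meq :: "nat \<Rightarrow> nat list \<Rightarrow> nat list \<Rightarrow> bool" for n where
  rel: "Mrel n u v \<Longrightarrow> Meq n u v"
| refl: "Meq n u u"
| sym: "Meq n u v \<Longrightarrow> Meq n v u"
| trans: "Meq n u v \<Longrightarrow> Meq n v w \<Longrightarrow> Meq n u w"
| ctx: "Meq n u v \<Longrightarrow> Meq n (x @ u @ y) (x @ v @ y)"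

definition Mleft_multiple :: "nat \<Rightarrow> nat list \<Rightarrow> nat list \<Rightarrow> bool" where
  "Mleft_multiple n c a \<longleftrightarrow> (\<exists>b. Mword n b \<and> Meq n c (b @ a))"

definition Mleft_lcm :: "nat \<Rightarrow> nat list \<Rightarrow> nat list \<Rightarrow> nat list \<Rightarrow> bool" where
  "Mleft_lcm n m a b \<longleftrightarrow>
     Mleft_multiple n m a \<and> Mleft_multiple n m b \<and>
     (\<forall>c. Mword n c \<longrightarrow> Mleft_multiple n c a \<longrightarrow> Mleft_multiple n c b \<longrightarrow>
          Mleft_multiple n c m)"

end

theory Submission
  imports Defs
begin

text \<open>The relations of \<open>M\<^sub>n\<close> preserve the weight (the sum of the letters), which
makes induction on weight available. The presentation is right-complemented: writing
\<open>\<theta>(s,t)\<close> for the word \<open>Mcompl n s t\<close>, an equality \<open>A s = B t\<close> in \<open>M\<^sub>n\<close> forces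
\<open>A = B\<close> if \<open>s = t\<close>, and \<open>A = w \<theta>(s,t)\<close>, \<open>B = w \<theta>(t,s)\<close> for some \<open>w\<close> otherwise.
This is proved by following a derivation of \<open>A s = B t\<close> relation by relation, with
induction on weight to handle relations touching the last letter. It yields right
cancellation, and shows that \<open>\<theta>(s,t) s\<close> is a left-lcm of the letters \<open>s\<close> and \<open>t\<close>.
General left-lcms then come from the iteration \<open>lcm(a, b c) = lcm(x, b) c\<close>, where
\<open>lcm(a, c) = x c\<close>, by induction on the weight of a common left-multiple.\<close>

lemmas [trans] = Meq.trans

lemma Mword_Nil [simp]: "Mword n []"
  and Mword_Cons [simp]: "Mword n (x # xs) \<longleftrightarrow> 1 \<le> x \<and> x \<le> n \<and> Mword n xs"
  and Mword_append [simp]: "Mword n (u @ v) \<longleftrightarrow> Mword n u \<and> Mword n v"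
  by (auto simp: Mword_def)

lemma Meq_append_right: "Meq n u v \<Longrightarrow> Meq n (u @ z) (v @ z)"
  using Meq.ctx[of n u v "[]" z] by simp

lemma Meq_append_left: "Meq n u v \<Longrightarrow> Meq n (z @ u) (z @ v)"
  using Meq.ctx[of n u v z "[]"] by simp

lemma Meq_sum_list: "Meq n u v \<Longrightarrow> sum_list u = sum_list v"
  by (induction rule: Meq.induct) (auto simp: Mrel_def)

lemma Meq_Mword_iff: "Meq n u v \<Longrightarrow> Mword n u \<longleftrightarrow> Mword n v"
  by (induction rule: Meq.induct) (auto simp: Mrel_def)

definition Mstep :: "nat \<Rightarrow> nat list \<Rightarrow> nat list \<Rightarrow> bool" where
  "Mstep n u v \<longleftrightarrow>
     (\<exists>x y l r. u = x @ l @ y \<and> v = x @ r @ y \<and> (Mrel n l r \<or> Mrel n r l))"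

lemma Mstep_sym: "Mstep n u v \<Longrightarrow> Mstep n v u"
  unfolding Mstep_def by blast

lemma Mstep_append: "Mstep n u v \<Longrightarrow> Mstep n (x @ u @ y) (x @ v @ y)"
  unfolding Mstep_def by (metis append.assoc)

lemma Mrel_Mstep: "Mrel n u v \<Longrightarrow> Mstep n u v"
  unfolding Mstep_def by (metis append.left_neutral append.right_neutral)

lemma Meq_iff_rtranclp_Mstep: "Meq n u v \<longleftrightarrow> (Mstep n)\<^sup>*\<^sup>* u v"
proof
  assume "Meq n u v"
  then show "(Mstep n)\<^sup>*\<^sup>* u v"
  proof (induction rule: Meq.induct)
    case (sym u v)
    have "symp (Mstep n)\<^sup>*\<^sup>*"
      by (rule symp_rtranclp) (auto intro: sympI Mstep_sym)
    with sym.IH show ?case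
      by (blast dest: sympD)
  next
    case (ctx u v x y)
    from ctx.IH show ?case
      by (induction rule: rtranclp_induct) (auto intro: rtranclp.rtrancl_into_rtrancl Mstep_append)
  qed (auto intro: Mrel_Mstep)
next
  have step: "Mstep n u v \<Longrightarrow> Meq n u v" for u v
    unfolding Mstep_def by (auto intro: Meq.ctx Meq.rel Meq.sym)
  show "(Mstep n)\<^sup>*\<^sup>* u v \<Longrightarrow> Meq n u v"
    by (induction rule: rtranclp_induct) (auto intro: Meq.refl Meq.trans step)
qed

text \<open>The relation \<open>1 n i = (i+1) n\<close> reads \<open>\<theta>(i,n) i = \<theta>(n,i) n\<close> with
\<open>\<theta>(i,n) = 1 n\<close> and \<open>\<theta>(n,i) = i+1\<close>; for \<open>s, t < n\<close> the same relation gives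
\<open>\<theta>(s,t) = \<theta>(s+1,t+1) 1 n\<close>.\<close>

function Mcompl :: "nat \<Rightarrow> nat \<Rightarrow> nat \<Rightarrow> nat list" where
  "Mcompl n s t =
     (if n \<le> s then [t + 1] else if n \<le> t then [1, n] else Mcompl n (s + 1) (t + 1) @ [1, n])"
  by auto
termination by (relation "measure (\<lambda>(n, s, t). n - s)") auto

declare Mcompl.simps [simp del]

lemma Mcompl_left_top: "Mcompl n n i = [i + 1]"
  by (simp add: Mcompl.simps)

lemma Mcompl_right_top: "i < n \<Longrightarrow> Mcompl n i n = [1, n]"
  by (simp add: Mcompl.simps)

lemma Mcompl_Suc: "s < n \<Longrightarrow> t < n \<Longrightarrow> Mcompl n s t = Mcompl n (s + 1) (t + 1) @ [1, n]"
  by (simp add: Mcompl.simps)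

lemma Meq_rel: "1 \<le> i \<Longrightarrow> i < n \<Longrightarrow> Meq n [1, n, i] [i + 1, n]"
  by (rule Meq.rel) (auto simp: Mrel_def)

lemma Mword_Mcompl: "s \<noteq> t \<Longrightarrow> s \<le> n \<Longrightarrow> t \<le> n \<Longrightarrow> Mword n (Mcompl n s t)"
  by (induction n s t rule: Mcompl.induct) (subst Mcompl.simps, auto)

lemma Meq_Mcompl_snoc:
  "s \<noteq> t \<Longrightarrow> s \<in> {1..n} \<Longrightarrow> t \<in> {1..n} \<Longrightarrow>
   Meq n (Mcompl n s t @ [s]) (Mcompl n t s @ [t])"
proof (induction n s t rule: Mcompl.induct)
  case (1 n s t)
  consider "s = n" | "t = n" | "s < n" "t < n"
    using "1.prems" by force
  then show ?case
  proof cases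
    case 1
    then show ?thesis
      using Meq_rel[of t n] "1.prems" by (auto simp: Mcompl_left_top Mcompl_right_top intro: Meq.sym)
  next
    case 2
    then show ?thesis
      using Meq_rel[of s n] "1.prems" by (auto simp: Mcompl_left_top Mcompl_right_top)
  next
    case 3
    have IH: "Meq n (Mcompl n (s + 1) (t + 1) @ [s + 1]) (Mcompl n (t + 1) (s + 1) @ [t + 1])"
      using "1" 3 by auto
    have "Meq n (Mcompl n s t @ [s]) (Mcompl n (s + 1) (t + 1) @ [1, n, s])"
      using 3 by (simp add: Mcompl_Suc Meq.refl)
    also have "Meq n \<dots> (Mcompl n (s + 1) (t + 1) @ [s + 1] @ [n])"
      using Meq_append_left[OF Meq_rel[of s n]] "1.prems" 3 by simp
    also have "Meq n \<dots> (Mcompl n (t + 1) (s + 1) @ [t + 1] @ [n])"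
      using Meq_append_right[OF IH, of "[n]"] by simp
    also have "Meq n \<dots> (Mcompl n (t + 1) (s + 1) @ [1, n, t])"
      using Meq_append_left[OF Meq.sym[OF Meq_rel[of t n]]] "1.prems" 3 by simp
    also have "Meq n \<dots> (Mcompl n t s @ [t])"
      using 3 by (simp add: Mcompl_Suc Meq.refl)
    finally show ?thesis .
  qed
qed

lemma Mstep_snocE:
  assumes "Mstep n (B @ [t]) z"
  obtains (inner) B' where "z = B' @ [t]" "Mstep n B B'"
  | (rel) x i where "1 \<le> i" "i < n" "B = x @ [1, n]" "t = i" "z = (x @ [i + 1]) @ [n]"
  | (rel_converse) x i where "1 \<le> i" "i < n" "B = x @ [i + 1]" "t = n" "z = (x @ [1, n]) @ [i]"
proof -
  from assms obtain x y l r where e: "B @ [t] = x @ l @ y" "z = x @ r @ y"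
    and lr: "Mrel n l r \<or> Mrel n r l"
    unfolding Mstep_def by blast
  show ?thesis
  proof (cases y rule: rev_exhaust)
    case (snoc y' a)
    then have "Mstep n B (x @ r @ y')"
      using e lr unfolding Mstep_def by auto
    then show ?thesis
      using inner e snoc by auto
  next
    case Nil
    from lr show ?thesis
    proof
      assume "Mrel n l r"
      then obtain i where "1 \<le> i" "i < n" "l = [1, n, i]" "r = [i + 1, n]"
        unfolding Mrel_def by fastforce
      with e Nil rel show ?thesis by auto
    next
      assume "Mrel n r l"
      then obtain i where "1 \<le> i" "i < n" "r = [1, n, i]" "l = [i + 1, n]"
        unfolding Mrel_def by fastforce
      with e Nil rel_converse show ?thesis by auto
    qed
  qed
qed

definition Mcompl_split :: "nat \<Rightarrow> nat list \<Rightarrow> nat \<Rightarrow> nat list \<Rightarrow> nat \<Rightarrow> bool" where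
  "Mcompl_split n A s B t \<longleftrightarrow>
     (s = t \<longrightarrow> Meq n A B) \<and>
     (s \<noteq> t \<longrightarrow> s \<in> {1..n} \<and> t \<in> {1..n} \<and>
        (\<exists>w. Meq n A (w @ Mcompl n s t) \<and> Meq n B (w @ Mcompl n t s)))"

lemma Mcompl_split_refl: "Mcompl_split n A s A s"
  by (simp add: Mcompl_split_def Meq.refl)

lemma Mcompl_split_Meq: "Mcompl_split n A s B t \<Longrightarrow> Meq n B C \<Longrightarrow> Mcompl_split n A s C t"
  unfolding Mcompl_split_def by (meson Meq.sym Meq.trans)

lemma Mcompl_split_rel:
  assumes i: "1 \<le> i" "i < n"
    and split: "Mcompl_split n A s (x @ [1, n]) i"
    and cancel: "\<And>v. Meq n (x @ [1, n]) (v @ [1, n]) \<Longrightarrow> Meq n x v"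
  shows "Mcompl_split n A s (x @ [i + 1]) n"
proof -
  consider "s = i" | "s = n" | "s \<noteq> i" "s \<noteq> n" by blast
  then show ?thesis
  proof cases
    case 1
    then have "Meq n A (x @ Mcompl n i n)"
      using split i by (simp add: Mcompl_split_def Mcompl_right_top)
    moreover have "Meq n (x @ [i + 1]) (x @ Mcompl n n i)"
      by (simp add: Mcompl_left_top Meq.refl)
    ultimately show ?thesis
      using 1 i unfolding Mcompl_split_def by auto
  next
    case 2
    then obtain w where w: "Meq n A (w @ Mcompl n n i)" "Meq n (x @ [1, n]) (w @ Mcompl n i n)"
      using split i unfolding Mcompl_split_def by auto
    then have "Meq n (x @ [i + 1]) (w @ [i + 1])"
      using cancel i by (simp add: Mcompl_right_top Meq_append_right)
    then show ?thesis
      using w 2 unfolding Mcompl_split_def by (simp add: Mcompl_left_top) (meson Meq.sym Meq.trans)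
  next
    case 3
    then obtain w where w: "Meq n A (w @ Mcompl n s i)" "Meq n (x @ [1, n]) (w @ Mcompl n i s)"
      and s: "s \<in> {1..n}"
      using split unfolding Mcompl_split_def by auto
    have sn: "s < n"
      using s 3 by auto
    have "Meq n x (w @ Mcompl n (i + 1) (s + 1))"
      using cancel w(2) sn i by (simp add: Mcompl_Suc)
    then have "Meq n (x @ [i + 1]) (w @ Mcompl n (i + 1) (s + 1) @ [i + 1])"
      using Meq_append_right by fastforce
    also have "Meq n \<dots> (w @ Mcompl n (s + 1) (i + 1) @ [s + 1])"
      using Meq_append_left[OF Meq_Mcompl_snoc[of "i + 1" "s + 1" n]] 3 sn i by simp
    finally have "Meq n (x @ [i + 1]) ((w @ Mcompl n (s + 1) (i + 1)) @ Mcompl n n s)"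
      by (simp add: Mcompl_left_top)
    moreover have "Meq n A ((w @ Mcompl n (s + 1) (i + 1)) @ Mcompl n s n)"
      using w(1) sn i by (simp add: Mcompl_Suc Mcompl_right_top)
    ultimately show ?thesis
      unfolding Mcompl_split_def using s 3 by (auto intro!: exI[of _ "w @ Mcompl n (s + 1) (i + 1)"])
  qed
qed

lemma Mcompl_split_rel_converse:
  assumes i: "1 \<le> i" "i < n"
    and split: "Mcompl_split n A s (x @ [i + 1]) n"
    and IH: "\<And>v t. Meq n (x @ [i + 1]) (v @ [t]) \<Longrightarrow> Mcompl_split n x (i + 1) v t"
  shows "Mcompl_split n A s (x @ [1, n]) i"
proof -
  consider "s = n" | "s = i" | "s \<noteq> i" "s \<noteq> n" by blast
  then show ?thesis
  proof cases
    case 1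
    then have "Meq n A (x @ Mcompl n n i)"
      using split i by (simp add: Mcompl_split_def Mcompl_left_top)
    moreover have "Meq n (x @ [1, n]) (x @ Mcompl n i n)"
      using i by (simp add: Mcompl_right_top Meq.refl)
    ultimately show ?thesis
      using 1 i unfolding Mcompl_split_def by auto
  next
    case 2
    then obtain w where w: "Meq n A (w @ Mcompl n i n)" "Meq n (x @ [i + 1]) (w @ Mcompl n n i)"
      using split i unfolding Mcompl_split_def by auto
    then have "Mcompl_split n x (i + 1) w (i + 1)"
      using IH by (simp add: Mcompl_left_top)
    then have "Meq n (x @ [1, n]) (w @ [1, n])"
      by (simp add: Mcompl_split_def Meq_append_right)
    then show ?thesis
      using w 2 i unfolding Mcompl_split_def by (simp add: Mcompl_right_top) (meson Meq.sym Meq.trans)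
  next
    case 3
    then obtain w where w: "Meq n A (w @ Mcompl n s n)" "Meq n (x @ [i + 1]) (w @ Mcompl n n s)"
      and s: "s \<in> {1..n}"
      using split unfolding Mcompl_split_def by auto
    have sn: "s < n"
      using s 3 by auto
    have "Mcompl_split n x (i + 1) w (s + 1)"
      using IH w(2) by (simp add: Mcompl_left_top)
    then obtain z where z: "Meq n x (z @ Mcompl n (i + 1) (s + 1))"
      "Meq n w (z @ Mcompl n (s + 1) (i + 1))"
      unfolding Mcompl_split_def using 3 by auto
    have "Meq n (x @ [1, n]) (z @ Mcompl n i s)"
      using Meq_append_right[OF z(1), of "[1, n]"] sn i by (simp add: Mcompl_Suc)
    moreover have "Meq n A (w @ [1, n])"
      using w(1) sn by (simp add: Mcompl_right_top)
    then have "Meq n A (z @ Mcompl n s i)"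
      using Meq.trans Meq_append_right[OF z(2), of "[1, n]"] sn i by (fastforce simp: Mcompl_Suc)
    ultimately show ?thesis
      unfolding Mcompl_split_def using s 3 i by auto
  qed
qed

text \<open>A relation
applied at the end of the word only needs the claim for strictly lighter words: right
cancellation of \<open>1 n\<close> and the complement of \<open>x (i+1) = v t\<close>.\<close>

lemma Meq_snoc_Mcompl_split: "Meq n (A @ [s]) (B @ [t]) \<Longrightarrow> Mcompl_split n A s B t"
proof (induction "sum_list A + s" arbitrary: A s B t rule: less_induct)
  case less
  have "\<exists>B t. Z = B @ [t] \<and> Mcompl_split n A s B t" if "(Mstep n)\<^sup>*\<^sup>* (A @ [s]) Z" for Z
    using that
  proof (induction rule: rtranclp_induct)
    case base
    show ?case
      by (auto intro: Mcompl_split_refl)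
  next
    case (step Y Z)
    from step.IH obtain B t where Y: "Y = B @ [t]" and split: "Mcompl_split n A s B t"
      by blast
    have weight: "sum_list B + t = sum_list A + s"
      using Meq_sum_list[of n "A @ [s]" Y] step.hyps(1) Y by (simp add: Meq_iff_rtranclp_Mstep)
    from step.hyps(2)[unfolded Y] show ?case
    proof (cases rule: Mstep_snocE)
      case (inner B')
      then show ?thesis
        using split Mcompl_split_Meq by (metis Meq_iff_rtranclp_Mstep r_into_rtranclp)
    next
      case (rel x i)
      have "Meq n x v" if "Meq n (x @ [1, n]) (v @ [1, n])" for v
      proof -
        have "Mcompl_split n (x @ [1]) n (v @ [1]) n"
          using less.hyps[of "x @ [1]" n "v @ [1]" n] that weight rel by simp
        then have "Meq n (x @ [1]) (v @ [1])"
          by (simp add: Mcompl_split_def)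
        then have "Mcompl_split n x 1 v 1"
          using less.hyps[of x 1 v 1] weight rel by simp
        then show ?thesis
          by (simp add: Mcompl_split_def)
      qed
      with rel split show ?thesis
        using Mcompl_split_rel by blast
    next
      case (rel_converse x i)
      have "Mcompl_split n x (i + 1) v t'" if "Meq n (x @ [i + 1]) (v @ [t'])" for v t'
        using less.hyps[of x "i + 1" v t'] that weight rel_converse by simp
      with rel_converse split show ?thesis
        using Mcompl_split_rel_converse by blast
    qed
  qed
  with less.prems show ?case
    by (auto simp: Meq_iff_rtranclp_Mstep)
qed

lemma Meq_snoc_cancel: "Meq n (u @ [s]) (v @ [s]) \<Longrightarrow> Meq n u v"
  using Meq_snoc_Mcompl_split[of n u s v s] by (simp add: Mcompl_split_def)

lemma Meq_append_cancel: "Meq n (u @ z) (v @ z) \<Longrightarrow> Meq n u v"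
proof (induction z arbitrary: u v rule: rev_induct)
  case (snoc x z)
  then show ?case
    using Meq_snoc_cancel[of n "u @ z" x "v @ z"] by simp
qed simp

lemma Meq_snoc_distinct:
  assumes "Meq n (u @ [s]) (v @ [t])" "s \<noteq> t"
  obtains w where "Meq n u (w @ Mcompl n s t)" "Meq n v (w @ Mcompl n t s)"
    "s \<in> {1..n}" "t \<in> {1..n}"
  using Meq_snoc_Mcompl_split[OF assms(1)] assms(2) unfolding Mcompl_split_def by blast

lemma Mleft_multipleI: "Mword n b \<Longrightarrow> Meq n c (b @ a) \<Longrightarrow> Mleft_multiple n c a"
  unfolding Mleft_multiple_def by blast

lemma Mleft_multiple_refl: "Mleft_multiple n c c"
  using Mleft_multipleI[of n "[]" c c] Meq.refl by simp

lemma Mleft_multiple_append: "Mword n b \<Longrightarrow> Mleft_multiple n (b @ a) a"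
  using Mleft_multipleI Meq.refl by blast

lemma Mleft_multiple_Mword: "Mleft_multiple n c a \<Longrightarrow> Mword n c \<Longrightarrow> Mword n a"
  unfolding Mleft_multiple_def using Meq_Mword_iff by fastforce

lemma Mleft_multiple_Meq: "Meq n c c' \<Longrightarrow> Mleft_multiple n c' a \<Longrightarrow> Mleft_multiple n c a"
  unfolding Mleft_multiple_def using Meq.trans by blast

lemma Mleft_multiple_trans:
  assumes "Mleft_multiple n c m" "Mleft_multiple n m a"
  shows "Mleft_multiple n c a"
proof -
  from assms obtain b b' where b: "Mword n b" "Meq n c (b @ m)" and b': "Mword n b'" "Meq n m (b' @ a)"
    unfolding Mleft_multiple_def by blast
  have "Meq n c ((b @ b') @ a)"
    using b(2) Meq_append_left[OF b'(2), of b] Meq.trans by fastforce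
  with b b' show ?thesis
    by (intro Mleft_multipleI[of n "b @ b'"]) auto
qed

lemma Mleft_multiple_append_right: "Mleft_multiple n c a \<Longrightarrow> Mleft_multiple n (c @ z) (a @ z)"
  unfolding Mleft_multiple_def using Meq_append_right by fastforce

lemma Mleft_multiple_append_cancel:
  "Mleft_multiple n (c @ z) (a @ z) \<Longrightarrow> Mleft_multiple n c a"
  unfolding Mleft_multiple_def using Meq_append_cancel by fastforce

lemma Mleft_lcm_commute: "Mleft_lcm n m a b \<longleftrightarrow> Mleft_lcm n m b a"
  unfolding Mleft_lcm_def by blast

lemma Mleft_lcm_multiple: "Mleft_multiple n m a \<Longrightarrow> Mleft_lcm n m m a"
  unfolding Mleft_lcm_def by (blast intro: Mleft_multiple_refl)

lemma Mleft_lcm_letters: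
  assumes "s \<noteq> t" "s \<in> {1..n}" "t \<in> {1..n}"
  shows "Mleft_lcm n (Mcompl n s t @ [s]) [s] [t]"
  unfolding Mleft_lcm_def
proof (intro conjI allI impI)
  show "Mleft_multiple n (Mcompl n s t @ [s]) [s]"
    using assms by (auto intro: Mleft_multiple_append Mword_Mcompl)
  show "Mleft_multiple n (Mcompl n s t @ [s]) [t]"
  proof (rule Mleft_multiple_Meq[OF Meq_Mcompl_snoc[OF assms]])
    show "Mleft_multiple n (Mcompl n t s @ [t]) [t]"
      using assms by (auto intro: Mleft_multiple_append Mword_Mcompl)
  qed
next
  fix d
  assume d: "Mword n d" "Mleft_multiple n d [s]" "Mleft_multiple n d [t]"
  then obtain p q where p: "Meq n d (p @ [s])" and q: "Meq n d (q @ [t])"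
    unfolding Mleft_multiple_def by blast
  then obtain w where w: "Meq n p (w @ Mcompl n s t)"
    using Meq_snoc_distinct[of n p s q t] assms(1) by (meson Meq.sym Meq.trans)
  have dw: "Meq n d (w @ Mcompl n s t @ [s])"
    using p Meq_append_right[OF w, of "[s]"] Meq.trans by fastforce
  with d(1) have "Mword n w"
    using Meq_Mword_iff by fastforce
  with dw show "Mleft_multiple n d (Mcompl n s t @ [s])"
    by (rule Mleft_multipleI[rotated])
qed

lemma Mleft_lcm_append:
  assumes m1: "Mleft_lcm n m1 a c" "Meq n m1 (x @ c)"
    and m2: "Mleft_lcm n m2 x b"
  shows "Mleft_lcm n (m2 @ c) a (b @ c)"
  unfolding Mleft_lcm_def
proof (intro conjI allI impI)
  have "Mleft_multiple n (m2 @ c) (x @ c)"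
    using m2 by (simp add: Mleft_lcm_def Mleft_multiple_append_right)
  moreover have "Mleft_multiple n (x @ c) m1"
    using Mleft_multiple_Meq[OF Meq.sym[OF m1(2)] Mleft_multiple_refl] .
  moreover have "Mleft_multiple n m1 a"
    using m1(1) by (simp add: Mleft_lcm_def)
  ultimately show "Mleft_multiple n (m2 @ c) a"
    by (blast intro: Mleft_multiple_trans)
  show "Mleft_multiple n (m2 @ c) (b @ c)"
    using m2 by (simp add: Mleft_lcm_def Mleft_multiple_append_right)
next
  fix d
  assume d: "Mword n d" "Mleft_multiple n d a" "Mleft_multiple n d (b @ c)"
  have "Mword n (b @ c)"
    using d(1,3) by (rule Mleft_multiple_Mword[rotated])
  then have "Mleft_multiple n d c"
    using Mleft_multiple_trans[OF d(3) Mleft_multiple_append[of n b c]] by simp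
  with d m1(1) have "Mleft_multiple n d m1"
    unfolding Mleft_lcm_def by blast
  then obtain p where p: "Mword n p" "Meq n d (p @ m1)"
    unfolding Mleft_multiple_def by blast
  have dpx: "Meq n d ((p @ x) @ c)"
    using Meq.trans[OF p(2) Meq_append_left[OF m1(2)]] by simp
  have px: "Mword n (p @ x)"
    using d(1) Meq_Mword_iff[OF dpx] by simp
  have "Mleft_multiple n (p @ x) b"
    using Mleft_multiple_append_cancel[OF Mleft_multiple_Meq[OF Meq.sym[OF dpx] d(3)]] .
  moreover have "Mleft_multiple n (p @ x) x"
    using p(1) by (rule Mleft_multiple_append)
  ultimately have "Mleft_multiple n (p @ x) m2"
    using m2 px unfolding Mleft_lcm_def by blast
  then show "Mleft_multiple n d (m2 @ c)"
    using Mleft_multiple_Meq[OF dpx Mleft_multiple_append_right] by blast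
qed

lemma Mleft_multiple_snoc_descend:
  assumes "Mword n d" "Mleft_multiple n d (a @ [t])" "Mleft_multiple n d (b @ [t])"
  obtains d' where "Mword n d'" "sum_list d' < sum_list d"
    "Mleft_multiple n d' a" "Mleft_multiple n d' b"
proof -
  from assms obtain p where p: "Mword n p" "Meq n d ((p @ a) @ [t])"
    unfolding Mleft_multiple_def by auto
  have pa: "Mword n (p @ a @ [t])"
    using assms(1) p(2) Meq_Mword_iff by fastforce
  show ?thesis
  proof
    show "Mword n (p @ a)"
      using pa by simp
    show "sum_list (p @ a) < sum_list d"
      using pa Meq_sum_list[OF p(2)] by simp
    show "Mleft_multiple n (p @ a) a"
      using p(1) by (rule Mleft_multiple_append)
    show "Mleft_multiple n (p @ a) b"
      using Mleft_multiple_append_cancel Mleft_multiple_Meq[OF Meq.sym[OF p(2)] assms(3)] by blast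
  qed
qed

definition Mleft_lcms_below :: "nat \<Rightarrow> nat \<Rightarrow> bool" where
  "Mleft_lcms_below n W \<longleftrightarrow>
     (\<forall>c a b. Mword n c \<longrightarrow> sum_list c < W \<longrightarrow> Mleft_multiple n c a \<longrightarrow> Mleft_multiple n c b \<longrightarrow>
        (\<exists>m. Mword n m \<and> Mleft_lcm n m a b))"

lemma Mleft_lcm_letter_exists:
  assumes below: "Mleft_lcms_below n (sum_list c)"
    and c: "Mword n c" "Mleft_multiple n c a" "Mleft_multiple n c [t]"
  obtains m where "Mword n m" "Mleft_lcm n m a [t]"
proof (cases a rule: rev_exhaust)
  case Nil
  have t: "t \<in> {1..n}"
    using c Mleft_multiple_Mword by fastforce
  then have "Mleft_lcm n [t] [] [t]"
    using Mleft_lcm_multiple[of n "[t]" "[]"] Mleft_multiple_append[of n "[t]" "[]"]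
    by (simp add: Mleft_lcm_commute)
  with Nil t show ?thesis
    by (intro that[of "[t]"]) auto
next
  case (snoc a' s)
  have a: "Mword n a" and t: "t \<in> {1..n}"
    using c Mleft_multiple_Mword by fastforce+
  then have a': "Mword n a'" and s: "s \<in> {1..n}"
    using snoc by auto
  show ?thesis
  proof (cases "s = t")
    case True
    have "Mleft_lcm n a a [t]"
      using Mleft_lcm_multiple Mleft_multiple_append[OF a'] snoc True by simp
    with a show ?thesis
      by (rule that)
  next
    case False
    note st = Mleft_lcm_letters[OF False s t]
    have "Mleft_multiple n c [s]"
      using Mleft_multiple_trans[OF c(2)[unfolded snoc] Mleft_multiple_append[OF a']] .
    with st c have "Mleft_multiple n c (Mcompl n s t @ [s])"
      unfolding Mleft_lcm_def by blast
    then obtain d where "Mword n d" "sum_list d < sum_list c"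
      "Mleft_multiple n d (Mcompl n s t)" "Mleft_multiple n d a'"
      using Mleft_multiple_snoc_descend c(1,2) snoc by blast
    then obtain m2 where m2: "Mword n m2" "Mleft_lcm n m2 (Mcompl n s t) a'"
      using below unfolding Mleft_lcms_below_def by blast
    have "Mleft_lcm n (m2 @ [s]) [t] a"
      using Mleft_lcm_append[OF st[unfolded Mleft_lcm_commute[of _ _ "[s]"]] Meq.refl m2(2)]
        snoc by simp
    with m2(1) s show ?thesis
      by (intro that[of "m2 @ [s]"]) (auto simp: Mleft_lcm_commute)
  qed
qed

lemma Mleft_lcm_snoc_exists:
  assumes below: "Mleft_lcms_below n (sum_list c)"
    and c: "Mword n c" "Mleft_multiple n c a" "Mleft_multiple n c (b @ [t])"
  shows "\<exists>m. Mword n m \<and> Mleft_lcm n m a (b @ [t])"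
proof -
  have b: "Mword n b" and t: "t \<in> {1..n}"
    using c Mleft_multiple_Mword by fastforce+
  have ct: "Mleft_multiple n c [t]"
    using Mleft_multiple_trans[OF c(3) Mleft_multiple_append[OF b]] .
  obtain m1 where m1: "Mword n m1" "Mleft_lcm n m1 a [t]"
    using Mleft_lcm_letter_exists[OF below c(1,2) ct] .
  then obtain x where x: "Meq n m1 (x @ [t])"
    unfolding Mleft_lcm_def Mleft_multiple_def by auto
  have "Mleft_multiple n c m1"
    using m1(2) c(1,2) ct unfolding Mleft_lcm_def by blast
  then have "Mleft_multiple n c (x @ [t])"
    using Mleft_multiple_trans Mleft_multiple_Meq[OF x Mleft_multiple_refl] by blast
  then obtain d where "Mword n d" "sum_list d < sum_list c"
    "Mleft_multiple n d x" "Mleft_multiple n d b"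
    using Mleft_multiple_snoc_descend c(1,3) by blast
  then obtain m2 where m2: "Mword n m2" "Mleft_lcm n m2 x b"
    using below unfolding Mleft_lcms_below_def by blast
  with t show ?thesis
    using Mleft_lcm_append[OF m1(2) x m2(2)] by (intro exI[of _ "m2 @ [t]"]) auto
qed

lemma Mleft_lcm_exists:
  assumes "Mword n c" "Mleft_multiple n c a" "Mleft_multiple n c b"
  shows "\<exists>m. Mword n m \<and> Mleft_lcm n m a b"
  using assms
proof (induction "sum_list c" arbitrary: a b c rule: less_induct)
  case less
  then have below: "Mleft_lcms_below n (sum_list c)"
    unfolding Mleft_lcms_below_def by blast
  show ?case
  proof (cases b rule: rev_exhaust)
    case Nil
    have a: "Mword n a"
      using less.prems Mleft_multiple_Mword by blast
    then have "Mleft_lcm n a a []"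
      using Mleft_lcm_multiple Mleft_multiple_append[of n a "[]"] by simp
    with a Nil show ?thesis
      by blast
  next
    case (snoc b' t)
    then show ?thesis
      using Mleft_lcm_snoc_exists[OF below] less.prems by blast
  qed
qed

theorem proposition4p12:
  fixes n :: nat
  assumes "n \<ge> 1"
  shows "(\<forall>a b c. Mword n a \<longrightarrow> Mword n b \<longrightarrow> Mword n c \<longrightarrow>
            Meq n (a @ c) (b @ c) \<longrightarrow> Meq n a b)
       \<and> (\<forall>a b. Mword n a \<longrightarrow> Mword n b \<longrightarrow>
            (\<exists>c. Mword n c \<and> Mleft_multiple n c a \<and> Mleft_multiple n c b) \<longrightarrow>
            (\<exists>m. Mword n m \<and> Mleft_lcm n m a b))"
  using Meq_append_cancel Mleft_lcm_exists by blast

end
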